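(* Assume AM defends every real machine, i.e. $d_r=e_r$ for all $r\in\mathcal M$ (so $D=1$). Let $\pi^*$ be the naive AM strategy with $\pi^*_m=e_m$ for every $m\in\mathcal M$ (the strategy called Existence). Then: (i) the M strategy $\rho$ with $\rho_m=\tfrac12$ for all $m\in\mathcal M$ is a best response of M to $\pi^*$, and $\max_{\rho\in[0,1]^{\mathcal M}}u_M(\pi^*,\rho)=\tfrac14$, so that $u_{AM}(\pi^*,\rho)=\tfrac34$ for every best response $\rho$ to $\pi^*$; (ii) for every naive AM strategy $\pi$ and every best response $\rho$ of M to $\pi$, $u_{AM}(\pi,\rho)\le\tfrac34$. Consequently, Existence, together with a best response of M, is an AM-optimal equilibrium among naive AM strategies.
   Context: Let $\mathcal M$ be a finite nonempty set of machine (environment) types. Let $e\in[0,1]^{\mathcal M}$ with $\sum_{r\in\mathcal M}e_r=1$ ($e_r$ is the fraction of all real machines that are of type $r$), and $d\in[0,1]^{\mathcal M}$ with $0\le d_r\le e_r$ ($d_r$ is the fraction of all real machines that are of type $r$ and defended by the anti-malware AM); put $D=\sum_{r}d_r$. An AM strategy $\pi$ assigns to each real machine type $r\in\mathcal M$ a vector $\pi^r\in[0,1]^{\mathcal M}$ with $\sum_{m}\pi^r_m\le 1$ ($\pi^r_m$ is the probability that AM creates a sandbox of type $m$ on a defended real machine of type $r$; with probability $1-\sum_m\pi^r_m$ no sandbox is created). AM's strategy is naive if $\pi^r$ does not depend on $r$; then we write $\pi_m$ for $\pi^r_m$. A malware (M) strategy is a vector $\rho\in[0,1]^{\mathcal M}$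 ($\rho_m$ is the probability M attacks when it perceives environment $m$). The utilities are $$u_M(\pi,\rho)=\sum_{r\in\mathcal M}\Big[(e_r-d_r)\rho_r+d_r\Big(1-\sum_{m\in\mathcal M}\pi^r_m\rho_m\Big)\rho_r\Big],$$ $$u_{AM}(\pi,\rho)=\sum_{r\in\mathcal M}d_r\Big[\sum_{m\in\mathcal M}\big(\pi^r_m\rho_m+\pi^r_m(1-\rho_m)(1-\rho_r)\big)+\Big(1-\sum_{m\in\mathcal M}\pi^r_m\Big)(1-\rho_r)\Big].$$ A best response of M to $\pi$ is any $\rho\in\arg\max_{\hat\rho\in[0,1]^{\mathcal M}}u_M(\pi,\hat\rho)$. A pair $(\pi,\rho)$ with $\rho$ a best response to $\pi$ is an equilibrium; it is AM-optimal within a class of AM strategies if $\pi$ lies in the class and $u_{AM}(\pi,\rho)\ge u_{AM}(\pi',\rho')$ for every equilibrium $(\pi',\rho')$ with $\pi'$ in the class. *)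

theory Defs
  imports Complex_Main
begin

text \<open>An AM strategy is a function p :: 'm => 'm => real, where p r m is the probability
  that AM creates a sandbox of type m on a defended real machine of type r.\<close>

definition env_distr :: "('m::finite \<Rightarrow> real) \<Rightarrow> bool" where
  "env_distr e \<longleftrightarrow> (\<forall>r. 0 \<le> e r \<and> e r \<le> 1) \<and> (\<Sum>r\<in>UNIV. e r) = 1"

definition am_strategy :: "('m::finite \<Rightarrow> 'm \<Rightarrow> real) \<Rightarrow> bool" where
  "am_strategy p \<longleftrightarrow> (\<forall>r m. 0 \<le> p r m \<and> p r m \<le> 1) \<and> (\<forall>r. (\<Sum>m\<in>UNIV. p r m) \<le> 1)"

definition naive :: "('m \<Rightarrow> 'm \<Rightarrow> real) \<Rightarrow> bool" where
  "naive p \<longleftrightarrow> (\<forall>r r'. p r = p r')"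

definition m_strategy :: "('m \<Rightarrow> real) \<Rightarrow> bool" where
  "m_strategy rho \<longleftrightarrow> (\<forall>m. 0 \<le> rho m \<and> rho m \<le> 1)"

definition u_M :: "('m::finite \<Rightarrow> real) \<Rightarrow> ('m \<Rightarrow> real) \<Rightarrow> ('m \<Rightarrow> 'm \<Rightarrow> real) \<Rightarrow> ('m \<Rightarrow> real) \<Rightarrow> real" where
  "u_M e d p rho = (\<Sum>r\<in>UNIV. (e r - d r) * rho r
       + d r * (1 - (\<Sum>m\<in>UNIV. p r m * rho m)) * rho r)"

definition u_AM :: "('m::finite \<Rightarrow> real) \<Rightarrow> ('m \<Rightarrow> 'm \<Rightarrow> real) \<Rightarrow> ('m \<Rightarrow> real) \<Rightarrow> real" where
  "u_AM d p rho = (\<Sum>r\<in>UNIV. d r *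
       ((\<Sum>m\<in>UNIV. p r m * rho m + p r m * (1 - rho m) * (1 - rho r))
        + (1 - (\<Sum>m\<in>UNIV. p r m)) * (1 - rho r)))"

definition best_response :: "('m::finite \<Rightarrow> real) \<Rightarrow> ('m \<Rightarrow> real) \<Rightarrow> ('m \<Rightarrow> 'm \<Rightarrow> real) \<Rightarrow> ('m \<Rightarrow> real) \<Rightarrow> bool" where
  "best_response e d p rho \<longleftrightarrow> m_strategy rho \<and>
     (\<forall>rho'. m_strategy rho' \<longrightarrow> u_M e d p rho' \<le> u_M e d p rho)"

definition equilibrium :: "('m::finite \<Rightarrow> real) \<Rightarrow> ('m \<Rightarrow> real) \<Rightarrow> ('m \<Rightarrow> 'm \<Rightarrow> real) \<Rightarrow> ('m \<Rightarrow> real) \<Rightarrow> bool" where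
  "equilibrium e d p rho \<longleftrightarrow> best_response e d p rho"

definition am_optimal_in :: "('m \<Rightarrow> 'm \<Rightarrow> real) set \<Rightarrow> ('m::finite \<Rightarrow> real) \<Rightarrow> ('m \<Rightarrow> real) \<Rightarrow> ('m \<Rightarrow> 'm \<Rightarrow> real) \<Rightarrow> ('m \<Rightarrow> real) \<Rightarrow> bool" where
  "am_optimal_in C e d p rho \<longleftrightarrow> equilibrium e d p rho \<and> p \<in> C \<and>
     (\<forall>p' rho'. p' \<in> C \<and> equilibrium e d p' rho' \<longrightarrow> u_AM d p' rho' \<le> u_AM d p rho)"

definition naive_strategies :: "('m::finite \<Rightarrow> 'm \<Rightarrow> real) set" where
  "naive_strategies = {p. am_strategy p \<and> naive p}"

end

theory Submission
  imports Defs
begin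

text \<open>With every machine defended the game is constant-sum: u_AM + u_M = 1. Against a naive
  strategy q, M's payoff factors as (1 - sum_m q_m rho_m) * (sum_r e_r rho_r). Under Existence
  (q = e) both factors depend only on s = sum_r e_r rho_r, so M gets s (1 - s) \<le> 1/4, attained at
  rho = 1/2. Against any naive q, the uniform rho = 1/2 already gives M at least
  (1 - (sum_m q_m) / 2) / 2 \<ge> 1/4, so no naive strategy leaves AM more than 3/4.\<close>

lemma u_AM_plus_u_M:
  "u_AM d p rho + u_M e d p rho = (\<Sum>r\<in>UNIV. d r) + (\<Sum>r\<in>UNIV. (e r - d r) * rho r)"
proof -
  have inner: "(\<Sum>m\<in>UNIV. p r m * rho m + p r m * (1 - rho m) * (1 - rho r))
      + (1 - (\<Sum>m\<in>UNIV. p r m)) * (1 - rho r)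
      = 1 - (1 - (\<Sum>m\<in>UNIV. p r m * rho m)) * rho r" for r
  proof -
    have "(\<Sum>m\<in>UNIV. p r m * (1 - rho m) * (1 - rho r))
        = (\<Sum>m\<in>UNIV. (1 - rho r) * (p r m - p r m * rho m))"
      by (rule sum.cong) (simp_all add: algebra_simps)
    also have "\<dots> = (1 - rho r) * ((\<Sum>m\<in>UNIV. p r m) - (\<Sum>m\<in>UNIV. p r m * rho m))"
      by (simp add: sum_subtractf flip: sum_distrib_left)
    finally have sandbox_sum: "(\<Sum>m\<in>UNIV. p r m * (1 - rho m) * (1 - rho r))
        = (1 - rho r) * ((\<Sum>m\<in>UNIV. p r m) - (\<Sum>m\<in>UNIV. p r m * rho m))" .
    show ?thesis
      by (simp only: sum.distrib sandbox_sum) (simp add: algebra_simps)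
  qed
  show ?thesis
    unfolding u_AM_def u_M_def inner
    by (simp add: algebra_simps flip: sum.distrib)
qed

corollary u_AM_full_defence:
  assumes "env_distr e"
  shows "u_AM e p rho = 1 - u_M e e p rho"
  using u_AM_plus_u_M[of e p rho e] assms by (simp add: env_distr_def)

lemma u_M_naive_full_defence:
  assumes "naive p"
  shows "u_M e e p rho = (1 - (\<Sum>m\<in>UNIV. p r0 m * rho m)) * (\<Sum>r\<in>UNIV. e r * rho r)"
proof -
  define q where "q = p r0"
  have "p r = q" for r
    using assms by (simp add: naive_def q_def)
  then have "u_M e e p rho = (\<Sum>r\<in>UNIV. e r * rho r * (1 - (\<Sum>m\<in>UNIV. q m * rho m)))"
    unfolding u_M_def \<open>\<And>r. p r = q\<close> by (intro sum.cong) (simp_all add: ac_simps)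
  then show ?thesis
    by (simp add: sum_distrib_right q_def mult.commute)
qed

lemma mult_one_minus_le_quarter: "(1 - t) * t \<le> (1/4 :: real)"
proof -
  have "0 \<le> (t - 1/2)\<^sup>2" by simp
  then show ?thesis by (simp add: power2_eq_square algebra_simps)
qed

lemma sum_half:
  assumes "env_distr e"
  shows "(\<Sum>r\<in>UNIV. e r / 2) = 1/2"
  using assms by (simp add: env_distr_def flip: sum_divide_distrib)

lemma u_M_existence:
  "u_M e e (\<lambda>r m. e m) rho = (1 - (\<Sum>r\<in>UNIV. e r * rho r)) * (\<Sum>r\<in>UNIV. e r * rho r)"
  by (rule u_M_naive_full_defence) (simp add: naive_def)

lemma u_M_existence_le_quarter: "u_M e e (\<lambda>r m. e m) rho \<le> 1/4"
  unfolding u_M_existence by (rule mult_one_minus_le_quarter)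

lemma u_M_existence_half:
  assumes "env_distr e"
  shows "u_M e e (\<lambda>r m. e m) (\<lambda>m. 1/2) = 1/4"
  unfolding u_M_existence by (simp add: sum_half[OF assms])

lemma u_M_naive_half_ge_quarter:
  assumes "env_distr e" "am_strategy p" "naive p"
  shows "1/4 \<le> u_M e e p (\<lambda>m. 1/2)"
proof -
  fix r0
  have "(\<Sum>m\<in>UNIV. p r0 m) \<le> 1"
    using assms(2) by (simp add: am_strategy_def)
  moreover have "(\<Sum>m\<in>UNIV. p r0 m / 2) = (\<Sum>m\<in>UNIV. p r0 m) / 2"
    by (simp flip: sum_divide_distrib)
  ultimately show ?thesis
    using u_M_naive_full_defence[OF assms(3), of e "\<lambda>m. 1/2" r0] sum_half[OF assms(1)]
    by simp
qed

lemma best_response_ge: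
  "best_response e d p rho \<Longrightarrow> m_strategy rho' \<Longrightarrow> u_M e d p rho' \<le> u_M e d p rho"
  by (simp add: best_response_def)

lemma m_strategy_half: "m_strategy (\<lambda>m. 1/2)"
  by (simp add: m_strategy_def)

lemma u_AM_naive_le:
  assumes "env_distr e" "am_strategy p" "naive p" "best_response e e p rho"
  shows "u_AM e p rho \<le> 3/4"
  using u_M_naive_half_ge_quarter[OF assms(1-3)] best_response_ge[OF assms(4) m_strategy_half]
  by (simp add: u_AM_full_defence[OF assms(1)])

lemma existence_naive_strategy:
  assumes "env_distr e"
  shows "(\<lambda>r m. e m) \<in> naive_strategies"
  using assms by (simp add: naive_strategies_def am_strategy_def naive_def env_distr_def)

theorem theorem1:
  fixes e d :: "'m::finite \<Rightarrow> real" and pistar :: "'m \<Rightarrow> 'm \<Rightarrow> real"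
  assumes "env_distr e"
    and "\<forall>r. d r = e r"
    and "pistar = (\<lambda>r m. e m)"
  shows "best_response e d pistar (\<lambda>m. 1/2)
       \<and> (\<forall>rho. m_strategy rho \<longrightarrow> u_M e d pistar rho \<le> 1/4)
       \<and> u_M e d pistar (\<lambda>m. 1/2) = 1/4
       \<and> (\<forall>rho. best_response e d pistar rho \<longrightarrow> u_AM d pistar rho = 3/4)
       \<and> (\<forall>p rho. am_strategy p \<and> naive p \<and> best_response e d p rho \<longrightarrow> u_AM d p rho \<le> 3/4)
       \<and> pistar \<in> naive_strategies
       \<and> (\<forall>rho. best_response e d pistar rho \<longrightarrow> am_optimal_in naive_strategies e d pistar rho)"
proof -
  have d: "d = e" using assms(2) by blast
  have le: "u_M e e pistar rho \<le> 1/4" for rho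
    using u_M_existence_le_quarter by (simp add: assms(3))
  have half: "u_M e e pistar (\<lambda>m. 1/2) = 1/4"
    using u_M_existence_half[OF assms(1)] by (simp add: assms(3))
  have br_half: "best_response e e pistar (\<lambda>m. 1/2)"
    unfolding best_response_def by (metis le half m_strategy_half)
  have br_value: "u_AM e pistar rho = 3/4" if "best_response e e pistar rho" for rho
    using le[of rho] best_response_ge[OF that m_strategy_half] half
    by (simp add: u_AM_full_defence[OF assms(1)])
  have naive_le: "u_AM e p rho \<le> 3/4" if "p \<in> naive_strategies" "best_response e e p rho" for p rho
    using u_AM_naive_le[OF assms(1) _ _ that(2)] that(1) by (simp add: naive_strategies_def)
  have naive: "pistar \<in> naive_strategies"
    using existence_naive_strategy[OF assms(1)] by (simp add: assms(3))
  have optimal: "am_optimal_in naive_strategies e e pistar rho" if "best_response e e pistar rho" for rho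
    unfolding am_optimal_in_def equilibrium_def
    using that naive naive_le br_value[OF that] by fastforce
  show ?thesis
    unfolding d using br_half le half br_value naive_le naive optimal
    by (simp add: naive_strategies_def)
qed

end
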